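(* Let $R$ be a ring with identity and $a,b,c\in R$. Then: (i) if $a$ is right annihilator $(b,c)$-invertible, then $b^\circ=(cab)^\circ$; (ii) if $a$ is left annihilator $(b,c)$-invertible, then ${}^\circ c={}^\circ(cab)$.
   Context: For $x\in R$: $x^\circ=\{r\in R: xr=0\}$, ${}^\circ x=\{r\in R: rx=0\}$. The element $a$ is right annihilator $(b,c)$-invertible if there is $y\in R$ with $c^\circ\subseteq y^\circ$ and $yab=b$; left annihilator $(b,c)$-invertible if there is $y\in R$ with ${}^\circ b\subseteq {}^\circ y$ and $cay=c$. *)

theory Defs
  imports Main
begin

definition rann :: "'a::ring_1 \<Rightarrow> 'a set" where
  "rann x = {r. x * r = 0}"

definition lann :: "'a::ring_1 \<Rightarrow> 'a set" where
  "lann x = {r. r * x = 0}"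

definition right_ann_bc_invertible :: "'a::ring_1 \<Rightarrow> 'a \<Rightarrow> 'a \<Rightarrow> bool" where
  "right_ann_bc_invertible a b c \<longleftrightarrow> (\<exists>y. rann c \<subseteq> rann y \<and> y * a * b = b)"

definition left_ann_bc_invertible :: "'a::ring_1 \<Rightarrow> 'a \<Rightarrow> 'a \<Rightarrow> bool" where
  "left_ann_bc_invertible a b c \<longleftrightarrow> (\<exists>y. lann b \<subseteq> lann y \<and> c * a * y = c)"

end

theory Submission
  imports Defs
begin

text \<open>One inclusion holds in any ring. For the other, if \<open>cabr = 0\<close> then \<open>abr\<close> lies in the
  right annihilator of \<open>c\<close>, hence in that of \<open>y\<close>, so \<open>br = yabr = 0\<close>; the left-hand
  statement is the mirror image.\<close>

lemma rann_subset_rann_mult: "rann x \<subseteq> rann (y * x)"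
  by (auto simp: rann_def mult.assoc)

lemma lann_subset_lann_mult: "lann x \<subseteq> lann (x * y)"
  by (auto simp: lann_def mult.assoc[symmetric])

lemma right_ann_bc_invertible_imp_rann_eq:
  assumes "right_ann_bc_invertible a b c"
  shows "rann b = rann (c * a * b)"
proof
  obtain y where ann: "rann c \<subseteq> rann y" and inv: "y * a * b = b"
    using assms unfolding right_ann_bc_invertible_def by blast
  show "rann (c * a * b) \<subseteq> rann b"
  proof
    fix r assume "r \<in> rann (c * a * b)"
    then have "a * b * r \<in> rann c"
      by (simp add: rann_def mult.assoc)
    then have "a * b * r \<in> rann y"
      using ann by blast
    then have "y * a * b * r = 0"
      by (simp add: rann_def mult.assoc)
    then show "r \<in> rann b"
      by (simp add: rann_def inv)
  qed
qed (simp add: rann_subset_rann_mult)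

lemma left_ann_bc_invertible_imp_lann_eq:
  assumes "left_ann_bc_invertible a b c"
  shows "lann c = lann (c * a * b)"
proof
  obtain y where ann: "lann b \<subseteq> lann y" and inv: "c * a * y = c"
    using assms unfolding left_ann_bc_invertible_def by blast
  show "lann (c * a * b) \<subseteq> lann c"
  proof
    fix r assume "r \<in> lann (c * a * b)"
    then have "r * c * a \<in> lann b"
      by (simp add: lann_def mult.assoc)
    then have "r * c * a \<in> lann y"
      using ann by blast
    then have "r * (c * a * y) = 0"
      by (simp add: lann_def mult.assoc)
    then show "r \<in> lann c"
      by (simp add: lann_def inv)
  qed
qed (metis lann_subset_lann_mult mult.assoc)

theorem proposition2p9:
  fixes a b c :: "'a::ring_1"
  shows "(right_ann_bc_invertible a b c \<longrightarrow> rann b = rann (c * a * b))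
       \<and> (left_ann_bc_invertible a b c \<longrightarrow> lann c = lann (c * a * b))"
  by (simp add: right_ann_bc_invertible_imp_rann_eq left_ann_bc_invertible_imp_lann_eq)

end
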